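(* Let $G=(V,E)$ be a finite connected simple graph and $i\in V$ such that $G-i$ is connected. Let $\tilde f:V\to\mathbb{R}$ be a solution of $$\min_{\|g\|_2=1,\ g(i)=0}\ \max_{ab\in E}|g(a)-g(b)|$$ with $\tilde f(j)>0$ for some $j$. Let $T_i^{(c)}$ be the spanning tree obtained by joining each vertex $x\ne i$ to a neighbor minimizing $\tilde f$ (ties broken arbitrarily), and for $j\in V$ let the spread-path from $j$ to $i$ be the path from $j$ to $i$ in $T_i^{(c)}$. Then every spread-path from $j$ to $i$ is a shortest path (in number of edges) from $j$ to $i$ in $G$.
   Context: Under the hypotheses, $\tilde f$ is positive on $V\setminus\{i\}$ and every vertex $x\neq i$ has a neighbor with strictly smaller $\tilde f$-value, so $T_i^{(c)}$ is a spanning tree of $G$. *)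

theory Defs
  imports Main "HOL-Analysis.Analysis"
begin

definition simple_graph :: "'a set \<Rightarrow> ('a \<Rightarrow> 'a \<Rightarrow> bool) \<Rightarrow> bool" where
  "simple_graph V E \<longleftrightarrow> finite V \<and> (\<forall>a b. E a b \<longrightarrow> a \<in> V \<and> b \<in> V)
     \<and> (\<forall>a b. E a b \<longrightarrow> E b a) \<and> (\<forall>a. \<not> E a a)"

definition connected_on :: "'a set \<Rightarrow> ('a \<Rightarrow> 'a \<Rightarrow> bool) \<Rightarrow> bool" where
  "connected_on W E \<longleftrightarrow> W \<noteq> {} \<and>
     (\<forall>x\<in>W. \<forall>y\<in>W. (\<lambda>a b. E a b \<and> a \<in> W \<and> b \<in> W)\<^sup>*\<^sup>* x y)"

definition edge_max :: "'a set \<Rightarrow> ('a \<Rightarrow> 'a \<Rightarrow> bool) \<Rightarrow> ('a \<Rightarrow> real) \<Rightarrow> real" where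
  "edge_max V E g = Max {\<bar>g a - g b\<bar> | a b. a \<in> V \<and> b \<in> V \<and> E a b}"

definition admissible :: "'a set \<Rightarrow> 'a \<Rightarrow> ('a \<Rightarrow> real) \<Rightarrow> bool" where
  "admissible V i g \<longleftrightarrow> sqrt (\<Sum>x\<in>V. (g x)\<^sup>2) = 1 \<and> g i = 0"

definition is_minimizer :: "'a set \<Rightarrow> ('a \<Rightarrow> 'a \<Rightarrow> bool) \<Rightarrow> 'a \<Rightarrow> ('a \<Rightarrow> real) \<Rightarrow> bool" where
  "is_minimizer V E i f \<longleftrightarrow> admissible V i f \<and>
     (\<forall>g. admissible V i g \<longrightarrow> edge_max V E f \<le> edge_max V E g)"

text \<open>p encodes T_i^(c): each x \<noteq> i is joined to a neighbour minimizing f.\<close>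
definition spread_parent :: "'a set \<Rightarrow> ('a \<Rightarrow> 'a \<Rightarrow> bool) \<Rightarrow> 'a \<Rightarrow> ('a \<Rightarrow> real) \<Rightarrow> ('a \<Rightarrow> 'a) \<Rightarrow> bool" where
  "spread_parent V E i f p \<longleftrightarrow>
     (\<forall>x\<in>V - {i}. E x (p x) \<and> (\<forall>y. E x y \<longrightarrow> f (p x) \<le> f y))"

definition walk_len :: "('a \<Rightarrow> 'a \<Rightarrow> bool) \<Rightarrow> 'a \<Rightarrow> 'a \<Rightarrow> nat \<Rightarrow> bool" where
  "walk_len E x y m \<longleftrightarrow> (\<exists>ws. length ws = Suc m \<and> ws ! 0 = x \<and> ws ! m = y \<and>
     (\<forall>k<m. E (ws ! k) (ws ! Suc k)))"

end

theory Submission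
  imports Defs
begin

text \<open>Let d be the graph distance to i. The normalized function d / \<parallel>d\<parallel> is admissible
with edge differences at most 1 / \<parallel>d\<parallel>, so the optimal value L satisfies L \<le> 1 / \<parallel>d\<parallel>.
Conversely any admissible f satisfies \<bar>f x\<bar> \<le> L d(x) along a shortest walk, and comparing
\<Sum> f^2 = 1 with L^2 \<Sum> d^2 \<le> 1 forces \<bar>f\<bar> = L d. Neighbours in G - i have values of modulus
at least L differing by at most L, hence of equal sign; so f = L d. A neighbour minimizing f
is then a neighbour one step closer to i, and the spread-path is a shortest path.\<close>

lemma walk_len_0_iff: "walk_len E x z 0 \<longleftrightarrow> x = z"
  unfolding walk_len_def by (auto intro: exI[of _ "[x]"])

lemma walk_len_Suc_iff: "walk_len E x z (Suc m) \<longleftrightarrow> (\<exists>y. E x y \<and> walk_len E y z m)"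
proof
  assume "walk_len E x z (Suc m)"
  then obtain ws where ws: "length ws = Suc (Suc m)" "ws ! 0 = x" "ws ! Suc m = z"
    "\<forall>k<Suc m. E (ws ! k) (ws ! Suc k)"
    unfolding walk_len_def by blast
  have "E x (ws ! 1)" using ws by (metis One_nat_def zero_less_Suc)
  moreover have "walk_len E (ws ! 1) z m"
    unfolding walk_len_def using ws by (intro exI[of _ "tl ws"]) (auto simp: nth_tl)
  ultimately show "\<exists>y. E x y \<and> walk_len E y z m" by blast
next
  assume "\<exists>y. E x y \<and> walk_len E y z m"
  then obtain y ws where "E x y" and ws: "length ws = Suc m" "ws ! 0 = y" "ws ! m = z"
    "\<forall>k<m. E (ws ! k) (ws ! Suc k)"
    unfolding walk_len_def by blast
  have "E ((x # ws) ! k) ((x # ws) ! Suc k)" if "k < Suc m" for k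
    using that \<open>E x y\<close> ws by (cases k) auto
  then show "walk_len E x z (Suc m)"
    unfolding walk_len_def using ws by (intro exI[of _ "x # ws"]) auto
qed

lemma walk_len_if_rtranclp:
  assumes "(\<lambda>a b. E a b \<and> a \<in> W \<and> b \<in> W)\<^sup>*\<^sup>* x y"
  shows "\<exists>m. walk_len E x y m"
  using assms
proof (induction rule: converse_rtranclp_induct)
  case base
  then show ?case using walk_len_0_iff by metis
next
  case (step a b)
  then show ?case using walk_len_Suc_iff by metis
qed

lemma walk_len_abs_diff_le:
  fixes g :: "'a \<Rightarrow> real"
  assumes "\<And>a b. E a b \<Longrightarrow> \<bar>g a - g b\<bar> \<le> c"
  shows "walk_len E x z m \<Longrightarrow> \<bar>g x - g z\<bar> \<le> c * m"
proof (induction m arbitrary: x)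
  case 0
  then show ?case by (simp add: walk_len_0_iff)
next
  case (Suc m)
  then obtain y where "E x y" "walk_len E y z m"
    using walk_len_Suc_iff by metis
  then have "\<bar>g y - g z\<bar> \<le> c * m" "\<bar>g x - g y\<bar> \<le> c"
    using Suc.IH assms by auto
  then show ?case by (simp add: algebra_simps)
qed

lemma connected_on_induct:
  assumes "connected_on W E" "j \<in> W" "P j" "x \<in> W"
    and "\<And>a b. E a b \<Longrightarrow> a \<in> W \<Longrightarrow> b \<in> W \<Longrightarrow> P a \<Longrightarrow> P b"
  shows "P x"
proof -
  have "(\<lambda>a b. E a b \<and> a \<in> W \<and> b \<in> W)\<^sup>*\<^sup>* j x"
    using assms(1,2,4) unfolding connected_on_def by blast
  then show ?thesis
    by (induction rule: rtranclp_induct) (use assms(3,5) in blast)+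
qed

lemma finite_edge_diffs:
  assumes "finite V"
  shows "finite {\<bar>g a - g b\<bar> | a b. a \<in> V \<and> b \<in> V \<and> E a b}"
proof (rule finite_subset)
  show "{\<bar>g a - g b\<bar> | a b. a \<in> V \<and> b \<in> V \<and> E a b} \<subseteq> (\<lambda>(a, b). \<bar>g a - g b\<bar>) ` (V \<times> V)"
    by auto
qed (use assms in simp)

lemma abs_diff_le_edge_max:
  "finite V \<Longrightarrow> a \<in> V \<Longrightarrow> b \<in> V \<Longrightarrow> E a b \<Longrightarrow> \<bar>g a - g b\<bar> \<le> edge_max V E g"
  unfolding edge_max_def by (rule Max_ge[OF finite_edge_diffs]) auto

lemma edge_max_le:
  assumes "finite V" "a \<in> V" "b \<in> V" "E a b"
    and "\<And>a b. a \<in> V \<Longrightarrow> b \<in> V \<Longrightarrow> E a b \<Longrightarrow> \<bar>g a - g b\<bar> \<le> c"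
  shows "edge_max V E g \<le> c"
  unfolding edge_max_def using assms finite_edge_diffs[OF assms(1)]
  by (subst Max_le_iff) blast+

lemma abs_eq_if_sum_power2_le:
  fixes f g :: "'a \<Rightarrow> real"
  assumes "finite V" and le: "\<And>x. x \<in> V \<Longrightarrow> \<bar>f x\<bar> \<le> g x"
    and sum_le: "(\<Sum>x\<in>V. (g x)\<^sup>2) \<le> (\<Sum>x\<in>V. (f x)\<^sup>2)" and "x \<in> V"
  shows "\<bar>f x\<bar> = g x"
proof -
  have gap_nonneg: "(g y)\<^sup>2 - (f y)\<^sup>2 \<ge> 0" if "y \<in> V" for y
    using power_mono[OF le[OF that] abs_ge_zero, of 2] by simp
  have "(\<Sum>y\<in>V. (g y)\<^sup>2 - (f y)\<^sup>2) \<ge> 0"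
    using gap_nonneg by (rule sum_nonneg)
  then have "(\<Sum>y\<in>V. (g y)\<^sup>2 - (f y)\<^sup>2) = 0"
    using sum_le by (simp add: sum_subtractf)
  then have "(g x)\<^sup>2 - (f x)\<^sup>2 = 0"
    using sum_nonneg_eq_0_iff[OF assms(1) gap_nonneg] \<open>x \<in> V\<close> by simp
  then have "\<bar>f x\<bar>\<^sup>2 = (g x)\<^sup>2"
    by simp
  then show ?thesis
    using le[OF \<open>x \<in> V\<close>] by (metis power2_eq_iff_nonneg abs_ge_zero order_trans)
qed

lemma minimizer_root: "is_minimizer V E i f \<Longrightarrow> f i = 0"
  unfolding is_minimizer_def admissible_def by blast

lemma minimizer_sum_power2: "is_minimizer V E i f \<Longrightarrow> (\<Sum>x\<in>V. (f x)\<^sup>2) = 1"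
  unfolding is_minimizer_def admissible_def by simp

locale rooted_graph =
  fixes V :: "'a set" and E :: "'a \<Rightarrow> 'a \<Rightarrow> bool" and i :: 'a
  assumes simple: "simple_graph V E"
    and reaches_root: "x \<in> V \<Longrightarrow> \<exists>m. walk_len E x i m"
begin

definition depth :: "'a \<Rightarrow> nat" where
  "depth x = (LEAST m. walk_len E x i m)"

lemma finite_V: "finite V"
  using simple unfolding simple_graph_def by blast

lemma edge_in_V: "E a b \<Longrightarrow> a \<in> V \<and> b \<in> V"
  using simple unfolding simple_graph_def by blast

lemma edge_sym: "E a b \<Longrightarrow> E b a"
  using simple unfolding simple_graph_def by blast

lemma edge_abs_diff_le_edge_max: "E a b \<Longrightarrow> \<bar>g a - g b\<bar> \<le> edge_max V E g"
  using abs_diff_le_edge_max[of V a b E g] finite_V edge_in_V by blast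

lemma walk_len_depth: "x \<in> V \<Longrightarrow> walk_len E x i (depth x)"
  unfolding depth_def using reaches_root by (rule LeastI_ex)

lemma depth_le: "walk_len E x i m \<Longrightarrow> depth x \<le> m"
  unfolding depth_def by (rule Least_le)

lemma depth_root [simp]: "depth i = 0"
  using depth_le[of i 0] by (simp add: walk_len_0_iff)

lemma depth_eq_0_iff: "x \<in> V \<Longrightarrow> depth x = 0 \<longleftrightarrow> x = i"
  by (metis depth_root walk_len_0_iff walk_len_depth)

lemma one_le_depth: "x \<in> V \<Longrightarrow> x \<noteq> i \<Longrightarrow> 1 \<le> depth x"
  using depth_eq_0_iff[of x] by (cases "depth x") auto

lemma depth_edge_le:
  assumes "E x y"
  shows "depth x \<le> depth y + 1"
proof -
  have "walk_len E x i (Suc (depth y))"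
    unfolding walk_len_Suc_iff using assms walk_len_depth edge_in_V[OF assms] by blast
  then show ?thesis
    using depth_le by simp
qed

lemma depth_step_down:
  assumes "x \<in> V" "x \<noteq> i"
  obtains y where "E x y" "depth y + 1 = depth x"
proof -
  obtain m where m: "depth x = Suc m"
    using one_le_depth[OF assms] by (cases "depth x") auto
  then obtain y where y: "E x y" "walk_len E y i m"
    using walk_len_depth[OF assms(1)] unfolding m walk_len_Suc_iff by blast
  then have "depth y + 1 = depth x"
    using depth_le[OF y(2)] depth_edge_le[OF y(1)] m by linarith
  with y(1) show thesis by (rule that)
qed

lemma abs_le_edge_max_depth:
  assumes "g i = 0" "x \<in> V"
  shows "\<bar>g x\<bar> \<le> edge_max V E g * depth x"
proof -
  from walk_len_abs_diff_le[of E g, OF edge_abs_diff_le_edge_max walk_len_depth[OF assms(2)]]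
  show ?thesis
    using assms(1) by simp
qed

lemma edge_max_nonneg: "E a b \<Longrightarrow> 0 \<le> edge_max V E g"
  using edge_abs_diff_le_edge_max[of a b g] by linarith

lemma sum_depth_power2_pos:
  assumes "x0 \<in> V" "x0 \<noteq> i"
  shows "0 < (\<Sum>x\<in>V. (real (depth x))\<^sup>2)"
proof -
  have "1 \<le> real (depth x0)"
    using one_le_depth[OF assms] by simp
  then have "1 \<le> (real (depth x0))\<^sup>2"
    by (rule one_le_power)
  also have "\<dots> \<le> (\<Sum>x\<in>V. (real (depth x))\<^sup>2)"
    using finite_V assms(1) by (intro member_le_sum) auto
  finally show ?thesis by simp
qed

lemma minimizer_edge_max_bound:
  assumes "is_minimizer V E i f" "x0 \<in> V" "x0 \<noteq> i"
  shows "(edge_max V E f)\<^sup>2 * (\<Sum>x\<in>V. (real (depth x))\<^sup>2) \<le> 1"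
proof -
  define S where "S = (\<Sum>x\<in>V. (real (depth x))\<^sup>2)"
  define g where "g x = real (depth x) / sqrt S" for x
  have S_pos: "S > 0"
    unfolding S_def using assms(2,3) by (rule sum_depth_power2_pos)
  obtain y0 where "E x0 y0"
    using depth_step_down[OF assms(2,3)] by blast
  have "(\<Sum>x\<in>V. (g x)\<^sup>2) = (\<Sum>x\<in>V. (real (depth x))\<^sup>2) / S"
    unfolding g_def sum_divide_distrib using S_pos by (simp add: power_divide)
  also have "\<dots> = 1"
    unfolding S_def[symmetric] using S_pos by simp
  finally have "admissible V i g"
    unfolding admissible_def using S_pos by (simp add: g_def)
  then have "edge_max V E f \<le> edge_max V E g"
    using assms(1) unfolding is_minimizer_def by blast
  also have "\<dots> \<le> 1 / sqrt S"
  proof (rule edge_max_le[of V x0 y0 E g, OF finite_V _ _ \<open>E x0 y0\<close>])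
    show "x0 \<in> V" "y0 \<in> V"
      using edge_in_V[OF \<open>E x0 y0\<close>] by auto
    fix a b assume "E a b"
    then have "\<bar>real (depth a) - real (depth b)\<bar> \<le> 1"
      using depth_edge_le[of a b] depth_edge_le[of b a] edge_sym by fastforce
    then show "\<bar>g a - g b\<bar> \<le> 1 / sqrt S"
      unfolding g_def using S_pos by (simp add: diff_divide_distrib[symmetric] divide_right_mono)
  qed
  finally have "(edge_max V E f)\<^sup>2 \<le> (1 / sqrt S)\<^sup>2"
    using edge_max_nonneg[OF \<open>E x0 y0\<close>] by (intro power_mono)
  also have "\<dots> = 1 / S"
    using S_pos by (simp add: power_divide)
  finally show ?thesis
    unfolding S_def[symmetric] using S_pos by (simp add: field_simps)
qed

lemma minimizer_abs_eq_depth: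
  assumes "is_minimizer V E i f" "x0 \<in> V" "x0 \<noteq> i" "x \<in> V"
  shows "\<bar>f x\<bar> = edge_max V E f * depth x"
proof (rule abs_eq_if_sum_power2_le[OF finite_V _ _ assms(4)])
  show "\<bar>f y\<bar> \<le> edge_max V E f * depth y" if "y \<in> V" for y
    using abs_le_edge_max_depth[of f, OF minimizer_root[OF assms(1)] that] .
  show "(\<Sum>y\<in>V. (edge_max V E f * depth y)\<^sup>2) \<le> (\<Sum>y\<in>V. (f y)\<^sup>2)"
    using minimizer_edge_max_bound[OF assms(1-3)] minimizer_sum_power2[OF assms(1)]
    by (simp add: power_mult_distrib sum_distrib_left)
qed

lemma minimizer_edge_max_pos:
  assumes "is_minimizer V E i f" "x0 \<in> V" "x0 \<noteq> i"
  shows "edge_max V E f > 0"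
proof -
  obtain y0 where "E x0 y0"
    using depth_step_down[OF assms(2,3)] by blast
  moreover have "edge_max V E f \<noteq> 0"
  proof
    assume "edge_max V E f = 0"
    then have "\<forall>x\<in>V. f x = 0"
      using minimizer_abs_eq_depth[OF assms] by simp
    then show False
      using minimizer_sum_power2[OF assms(1)] by simp
  qed
  ultimately show ?thesis
    using edge_max_nonneg by (metis order_neq_le_trans)
qed

lemma minimizer_eq_depth:
  assumes "is_minimizer V E i f" "connected_on (V - {i}) E" "j \<in> V" "f j > 0" "x \<in> V"
  shows "f x = edge_max V E f * depth x"
proof -
  let ?L = "edge_max V E f"
  have "j \<noteq> i"
    using minimizer_root[OF assms(1)] assms(4) by auto
  note abs_eq = minimizer_abs_eq_depth[OF assms(1,3) this]
  note L_pos = minimizer_edge_max_pos[OF assms(1,3) \<open>j \<noteq> i\<close>]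
  have abs_ge: "\<bar>f a\<bar> \<ge> ?L" if "a \<in> V - {i}" for a
  proof -
    have "1 \<le> real (depth a)"
      using one_le_depth that by simp
    then show ?thesis
      using abs_eq[of a] that L_pos by simp
  qed
  have pos_step: "f b > 0" if "E a b" "a \<in> V - {i}" "b \<in> V - {i}" "f a > 0" for a b
    using abs_ge[OF that(2)] abs_ge[OF that(3)] that(4)
      edge_abs_diff_le_edge_max[OF that(1), of f] L_pos
    by auto
  show ?thesis
  proof (cases "x = i")
    case True
    then show ?thesis using minimizer_root[OF assms(1)] by simp
  next
    case False
    then have "f x > 0"
      using connected_on_induct[OF assms(2), of j "\<lambda>a. f a > 0" x] pos_step assms(3-5) \<open>j \<noteq> i\<close>
      by blast
    then show ?thesis using abs_eq[OF assms(5)] by simp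
  qed
qed

lemma spread_parent_depth:
  fixes c :: real
  assumes "spread_parent V E i f p" "c > 0" "\<And>x. x \<in> V \<Longrightarrow> f x = c * depth x"
    and "x \<in> V" "x \<noteq> i"
  shows "p x \<in> V \<and> depth (p x) + 1 = depth x"
proof -
  have px: "E x (p x)" and p_min: "\<And>y. E x y \<Longrightarrow> f (p x) \<le> f y"
    using assms(1,4,5) unfolding spread_parent_def by auto
  obtain y where y: "E x y" "depth y + 1 = depth x"
    using depth_step_down[OF assms(4,5)] .
  have "c * depth (p x) \<le> c * depth y"
    using p_min[OF y(1)] assms(3) edge_in_V px y(1) by metis
  then have "depth (p x) \<le> depth y"
    using assms(2) by simp
  then show ?thesis
    using depth_edge_le[OF px] edge_in_V[OF px] y(2) by linarith
qed

lemma funpow_parent_depth: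
  assumes parent: "\<And>x. x \<in> V \<Longrightarrow> x \<noteq> i \<Longrightarrow> p x \<in> V \<and> depth (p x) + 1 = depth x"
    and "x \<in> V" "k \<le> depth x"
  shows "(p ^^ k) x \<in> V \<and> depth ((p ^^ k) x) + k = depth x"
  using assms(3)
proof (induction k)
  case 0
  then show ?case using assms(2) by simp
next
  case (Suc k)
  then have "(p ^^ k) x \<in> V" "depth ((p ^^ k) x) + k = depth x" by auto
  moreover from this have "depth ((p ^^ k) x) \<noteq> 0"
    using Suc.prems by linarith
  then have "(p ^^ k) x \<noteq> i"
    by (metis depth_root)
  ultimately show ?case
    using parent by fastforce
qed

lemma funpow_parent_first_root:
  assumes parent: "\<And>x. x \<in> V \<Longrightarrow> x \<noteq> i \<Longrightarrow> p x \<in> V \<and> depth (p x) + 1 = depth x"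
    and "x \<in> V"
  shows "(p ^^ depth x) x = i \<and> (\<forall>k<depth x. (p ^^ k) x \<noteq> i)"
proof (intro conjI allI impI)
  show "(p ^^ depth x) x = i"
    using funpow_parent_depth[OF parent assms(2) order_refl] depth_eq_0_iff by auto
  fix k assume "k < depth x"
  then have "depth ((p ^^ k) x) \<noteq> 0"
    using funpow_parent_depth[OF parent assms(2), of k] by simp
  then show "(p ^^ k) x \<noteq> i"
    by (metis depth_root)
qed

end

lemma rooted_graph_if_connected_on:
  assumes "simple_graph V E" "connected_on V E" "i \<in> V"
  shows "rooted_graph V E i"
proof (rule rooted_graph.intro)
  show "simple_graph V E"
    by (fact assms(1))
  fix x assume "x \<in> V"
  then have "(\<lambda>a b. E a b \<and> a \<in> V \<and> b \<in> V)\<^sup>*\<^sup>* x i"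
    using assms(2,3) unfolding connected_on_def by blast
  then show "\<exists>m. walk_len E x i m"
    by (rule walk_len_if_rtranclp)
qed

theorem theorem21:
  fixes V :: "'a set" and E :: "'a \<Rightarrow> 'a \<Rightarrow> bool" and i :: 'a
    and f :: "'a \<Rightarrow> real" and p :: "'a \<Rightarrow> 'a"
  assumes "simple_graph V E"
    and "connected_on V E"
    and "i \<in> V"
    and "connected_on (V - {i}) E"
    and "is_minimizer V E i f"
    and "\<exists>j\<in>V. f j > 0"
    and "spread_parent V E i f p"
  shows "\<forall>j\<in>V. \<exists>n. (p ^^ n) j = i \<and> (\<forall>k<n. (p ^^ k) j \<noteq> i)
            \<and> (\<forall>m. walk_len E j i m \<longrightarrow> n \<le> m)"
proof -
  interpret rooted_graph V E i
    using assms(1-3) by (rule rooted_graph_if_connected_on)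
  obtain j where j: "j \<in> V" "f j > 0"
    using assms(6) by blast
  then have "j \<noteq> i"
    using minimizer_root[OF assms(5)] by auto
  have parent: "p x \<in> V \<and> depth (p x) + 1 = depth x" if "x \<in> V" "x \<noteq> i" for x
    using spread_parent_depth[OF assms(7) minimizer_edge_max_pos[OF assms(5) j(1) \<open>j \<noteq> i\<close>]
        minimizer_eq_depth[OF assms(5,4) j] that] .
  show ?thesis
    using funpow_parent_first_root[OF parent] depth_le by blast
qed

end
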